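(* There is an absolute constant $C$ such that the following holds. Let $n\in\mathbb N$, $c>0$, and let $w\in\mathcal W$ satisfy $|w|\le c$ and be measurable with respect to the product $\sigma$-algebra $\mathcal A_n^*\times\mathcal A_n^*$, where $\mathcal A_n^*$ is the (finite) algebra of subsets of $[0,1]$ generated by the intervals $I_i=[\frac in,\frac{i+1}n]$, $0\le i\le n-1$ (so $w$ is constant on each $I_i\times I_j$ up to boundaries). Then $$\Big|\sup_{A\in\mathcal A}\Gamma(w,A)-\max_{A\in\mathcal A_n^*}\Gamma(w,A)\Big|\le \frac{Cc}{n}.$$
   Context: $\mathcal W$ is the space of bounded symmetric measurable functions $[0,1]^2\to\mathbb R$; $\mathcal A$ is the collection of Lebesgue measurable subsets of $[0,1]$. With $[x]_+=\max(x,0)$, for $w\in\mathcal W$ and $A\in\mathcal A$, $$\Gamma(w,A)=\iint_{y<z}\Big[\int_{A\cap[0,y]}(w(x,z)-w(x,y))\,dx\Big]_+dy\,dz+\iint_{y<z}\Big[\int_{A\cap[z,1]}(w(x,y)-w(x,z))\,dx\Big]_+dy\,dz,$$ and $\Gamma(w)=\sup_{A\in\mathcal A}\Gamma(w,A)$. *)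

theory Defs
  imports "HOL-Analysis.Analysis"
begin

text \<open>The space W: bounded, symmetric, (Lebesgue) measurable functions on the unit square.
  Values outside the unit square are irrelevant.\<close>
definition graphonW :: "(real \<Rightarrow> real \<Rightarrow> real) set" where
  "graphonW = {w. (\<forall>x\<in>{0..1}. \<forall>y\<in>{0..1}. w x y = w y x)
                 \<and> (\<exists>B. \<forall>x\<in>{0..1}. \<forall>y\<in>{0..1}. \<bar>w x y\<bar> \<le> B)
                 \<and> (\<lambda>(x,y). w x y) \<in> borel_measurable (restrict_space lebesgue ({0..1} \<times> {0..1}))}"

definition measSets :: "real set set" where
  "measSets = {A. A \<in> sets lebesgue \<and> A \<subseteq> {0..1}}"

definition GammaW :: "(real \<Rightarrow> real \<Rightarrow> real) \<Rightarrow> real set \<Rightarrow> real" where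
  "GammaW w A =
     (LINT p : {(y,z). 0 \<le> y \<and> y < z \<and> z \<le> 1} | lebesgue.
        max 0 (LINT x : A \<inter> {0..fst p} | lebesgue. (w x (snd p) - w x (fst p))))
   + (LINT p : {(y,z). 0 \<le> y \<and> y < z \<and> z \<le> 1} | lebesgue.
        max 0 (LINT x : A \<inter> {snd p..1} | lebesgue. (w x (fst p) - w x (snd p))))"

definition GammaSup :: "(real \<Rightarrow> real \<Rightarrow> real) \<Rightarrow> real" where
  "GammaSup w = (SUP A\<in>measSets. GammaW w A)"

definition intervalsN :: "nat \<Rightarrow> real set set" where
  "intervalsN n = {{real i / real n .. (real i + 1) / real n} | i. i < n}"

text \<open>The (finite) algebra of subsets of [0,1] generated by the intervals I_i
  (for a finite generating family the generated algebra equals the generated sigma-algebra).\<close>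
definition algN :: "nat \<Rightarrow> real set set" where
  "algN n = sigma_sets {0..1} (intervalsN n)"

definition algN_measure :: "nat \<Rightarrow> real measure" where
  "algN_measure n = sigma {0..1} (intervalsN n)"

end

theory Submission
  imports Defs
begin

text \<open>
  Let w be bounded by c and measurable for A_n^* \<otimes> A_n^*; then w(x,y) depends
  on x only through the open grid cell containing x.  For a measurable A the inner integrals
  of \<Gamma>(w,A) are therefore, up to an error 4c/n from the partially covered cells at the
  ends, finite sums over whole cells weighted by the masses \<alpha>_i = |A \<inter> I_i|.  Hence
  \<Gamma>(w,A) = \<Phi>(\<alpha>) + O(c/n), where the discretised functional \<Phi> is convex in \<alpha> (a positive
  part of a linear form, integrated).  A convex function on the box [0,1/n]^n is maximised at
  a vertex, and the vertices are exactly the mass vectors of unions of closed cells, which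
  lie in A_n^*.  So every \<Gamma>(w,A) is within 16c/n of some \<Gamma>(w,B) with B \<in> A_n^*, giving C = 16.
\<close>

lemma lebesgue_measure_Icc: "l \<le> u \<Longrightarrow> measure lebesgue {l..u::real} = u - l"
  by (simp add: measure_def emeasure_completion)

lemma lmeasurable_subset_Icc: "S \<subseteq> {l..u::real} \<Longrightarrow> S \<in> sets lebesgue \<Longrightarrow> S \<in> lmeasurable"
  by (meson bounded_closed_interval bounded_set_imp_lmeasurable bounded_subset)

lemma integrable_indicator_lmeasurable:
  "S \<in> lmeasurable \<Longrightarrow> integrable lebesgue (indicator S :: 'a::euclidean_space \<Rightarrow> real)"
  unfolding fmeasurable_def by (auto intro: integrable_real_indicator)

lemma sigma_finite_lebesgue: "sigma_finite_measure (lebesgue :: real measure)"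
proof
  obtain C where C: "countable C" "C \<subseteq> sets (lborel::real measure)" "\<Union>C = space lborel"
      "\<forall>a\<in>C. emeasure lborel a \<noteq> \<infinity>"
    using lborel.sigma_finite_countable by blast
  show "\<exists>A. countable A \<and> A \<subseteq> sets (lebesgue::real measure) \<and> \<Union> A = space lebesgue
          \<and> (\<forall>a\<in>A. emeasure lebesgue a \<noteq> \<infinity>)"
    using C by (intro exI[of _ C]) (auto simp: emeasure_completion)
qed

section \<open>The grid of mesh 1/n\<close>

definition cell :: "nat \<Rightarrow> nat \<Rightarrow> real set" where
  "cell n i = {real i / real n <..< (real i + 1) / real n}"

definition grid :: "nat \<Rightarrow> real set" where
  "grid n = (\<lambda>j. real j / real n) ` {..n}"

definition cells_in :: "nat \<Rightarrow> real \<Rightarrow> real \<Rightarrow> nat set" where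
  "cells_in n s t = {i. i < n \<and> s \<le> real i / real n \<and> (real i + 1) / real n \<le> t}"

definition centre :: "nat \<Rightarrow> nat \<Rightarrow> real" where
  "centre n i = (real i + 1/2) / real n"

definition cell_union :: "nat \<Rightarrow> nat set \<Rightarrow> real set" where
  "cell_union n K = (\<Union>i\<in>K. {real i / real n .. (real i + 1) / real n})"

lemma cell_sets [measurable]: "cell n i \<in> sets lebesgue"
  by (simp add: cell_def)

lemma cells_in_subset: "cells_in n s t \<subseteq> {..<n}"
  by (auto simp: cells_in_def)

lemma cell_in_Icc_iff:
  assumes n: "n \<ge> 1" and x: "x \<in> cell n i"
  shows "x \<in> {real j / real n .. (real j + 1) / real n} \<longleftrightarrow> j = i"
proof
  have np: "real n > 0" using n by simp
  assume "x \<in> {real j / real n .. (real j + 1) / real n}"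
  hence "real j / real n < (real i + 1) / real n" "real i / real n < (real j + 1) / real n"
    using x by (auto simp: cell_def)
  hence "real j < real i + 1" "real i < real j + 1" using np by (simp_all add: divide_less_cancel)
  thus "j = i" by linarith
qed (use x in \<open>auto simp: cell_def\<close>)

lemma cells_disjoint: "n \<ge> 1 \<Longrightarrow> x \<in> cell n i \<Longrightarrow> x \<in> cell n j \<Longrightarrow> i = j"
  using cell_in_Icc_iff[of n x i j] by (auto simp: cell_def)

lemma cells_cover:
  assumes n: "n \<ge> 1" and x: "0 \<le> x" "x \<le> 1" "x \<notin> grid n"
  shows "\<exists>i<n. x \<in> cell n i"
proof -
  have np: "real n > 0" using n by simp
  define k where "k = nat \<lfloor>real n * x\<rfloor>"
  have k: "real k \<le> real n * x" "real n * x < real k + 1"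
    using x np by (simp_all add: k_def)
  have ne: "real k \<noteq> real n * x"
  proof
    assume "real k = real n * x"
    moreover have "real n * x \<le> real n" using x np by (simp add: mult_left_le)
    ultimately have "k \<le> n" by simp
    moreover have "x = real k / real n" using \<open>real k = real n * x\<close> np by (simp add: field_simps)
    ultimately show False using x(3) by (auto simp: grid_def)
  qed
  have "real k < real n" using k ne x np by (smt (verit) mult_left_le)
  moreover have "real k / real n < x" "x < (real k + 1) / real n"
    using k ne np by (simp_all add: field_simps)
  ultimately show ?thesis by (auto simp: cell_def)
qed

lemma grid_null: "grid n \<in> null_sets lebesgue"
  by (rule null_sets_completionI) (simp add: grid_def finite_imp_null_set_lborel)

lemma cell_measure: "n \<ge> 1 \<Longrightarrow> measure lebesgue (cell n i) = 1 / real n"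
  by (simp add: cell_def measure_def emeasure_completion divide_right_mono diff_divide_distrib[symmetric])

lemma cell_subset_unit:
  assumes "i < n" shows "cell n i \<subseteq> {0..1}"
proof -
  have "(real i + 1) / real n \<le> 1" using assms by (simp add: divide_le_eq_1)
  moreover have "0 \<le> real i / real n" by simp
  ultimately show ?thesis unfolding cell_def
    by (intro subsetI) (simp only: greaterThanLessThan_iff atLeastAtMost_iff, linarith)
qed

lemma centre_in_cell: "n \<ge> 1 \<Longrightarrow> centre n i \<in> cell n i"
  by (auto simp: centre_def cell_def divide_strict_right_mono)

lemma cell_union_inter_cell:
  "n \<ge> 1 \<Longrightarrow> cell_union n K \<inter> cell n i = (if i \<in> K then cell n i else {})"
  using cell_in_Icc_iff[of n _ i] by (auto simp: cell_union_def)

section \<open>Integrals of functions that are constant on the cells\<close>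

text \<open>Within [s,t] only a set of measure at most 2/n (next to the endpoints) is not covered
  by the open cells whose closures lie inside [s,t].\<close>
lemma uncovered_measure:
  assumes n: "n \<ge> 1" and st: "0 \<le> s" "t \<le> 1"
  shows "measure lebesgue ({s..t} - (\<Union>i\<in>cells_in n s t. cell n i)) \<le> 2 / real n"
proof -
  let ?R = "{s..t} - (\<Union>i\<in>cells_in n s t. cell n i)"
  let ?U = "({s..s + 1/real n} \<union> {t - 1/real n..t}) \<union> grid n"
  have "?R \<subseteq> ?U"
  proof
    fix x assume x: "x \<in> ?R"
    show "x \<in> ?U"
    proof (cases "x \<in> grid n")
      case False
      have x01: "0 \<le> x" "x \<le> 1" "s \<le> x" "x \<le> t" using x st by auto
      obtain i where i: "i < n" "x \<in> cell n i" using cells_cover[OF n x01(1,2) False] by blast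
      have "i \<notin> cells_in n s t" using x i by auto
      hence "\<not> s \<le> real i / real n \<or> \<not> real i / real n + 1 / real n \<le> t"
        using i by (auto simp: cells_in_def add_divide_distrib)
      moreover have "real i / real n < x" "x < real i / real n + 1 / real n"
        using i(2) by (auto simp: cell_def add_divide_distrib)
      ultimately show ?thesis using x01 by auto
    qed simp
  qed
  moreover have "?U \<in> lmeasurable"
  proof (rule bounded_set_imp_lmeasurable)
    show "bounded ?U" by (simp add: grid_def finite_imp_bounded)
    show "?U \<in> sets lebesgue" using grid_null[of n] by (intro sets.Un) auto
  qed
  ultimately have "measure lebesgue ?R \<le> measure lebesgue ?U"
    by (intro measure_mono_fmeasurable) auto
  also have "\<dots> = measure lebesgue ({s..s + 1/real n} \<union> {t - 1/real n..t})"
    using grid_null by (intro measure_Un_null_set) auto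
  also have "\<dots> \<le> measure lebesgue {s..s + 1/real n} + measure lebesgue {t - 1/real n..t}"
    by (intro measure_Un_le) auto
  also have "\<dots> = 2 / real n" by (simp add: lebesgue_measure_Icc)
  finally show ?thesis .
qed

lemma set_integral_bounded:
  fixes h :: "'a::euclidean_space \<Rightarrow> real"
  assumes S: "S \<in> lmeasurable" and h: "h \<in> borel_measurable lebesgue"
    and hB: "\<And>x. x \<in> S \<Longrightarrow> \<bar>h x\<bar> \<le> B" and B: "0 \<le> B"
  shows "set_integrable lebesgue S h" and "\<bar>LINT x:S|lebesgue. h x\<bar> \<le> B * measure lebesgue S"
proof -
  have SB: "\<bar>indicator S x *\<^sub>R h x\<bar> \<le> B * indicator S x" for x
    using hB[of x] B by (auto simp: indicator_def)
  have SB_int: "integrable lebesgue (\<lambda>x. B * indicator S x)"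
    using integrable_indicator_lmeasurable[OF S] by simp
  show int: "set_integrable lebesgue S h"
    unfolding set_integrable_def
  proof (rule Bochner_Integration.integrable_bound[OF SB_int])
    show "(\<lambda>x. indicator S x *\<^sub>R h x) \<in> borel_measurable lebesgue"
      using S by (intro borel_measurable_scaleR borel_measurable_indicator h) auto
    show "AE x in lebesgue. norm (indicator S x *\<^sub>R h x) \<le> norm (B * indicator S x)"
      using SB B by (intro AE_I2) simp
  qed
  have "\<bar>LINT x:S|lebesgue. h x\<bar> \<le> (\<integral>x. B * indicator S x \<partial>lebesgue)"
    unfolding set_lebesgue_integral_def
    using int SB by (intro integral_abs_bound_integral SB_int) (simp_all add: set_integrable_def)
  thus "\<bar>LINT x:S|lebesgue. h x\<bar> \<le> B * measure lebesgue S" by simp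
qed

text \<open>If h is bounded by B on [0,1] and equals H i on the i-th open cell, then the integral of
  h over A \<inter> [s,t] is the cell-wise Riemann sum up to an error 2B/n: the remainder R of
  A \<inter> [s,t] outside the cells lying in [s,t] has measure at most 2/n.\<close>
lemma cellwise_integral_approx:
  fixes h :: "real \<Rightarrow> real"
  assumes n: "n \<ge> 1" and st: "0 \<le> s" "t \<le> 1" and A: "A \<in> sets lebesgue"
    and h: "h \<in> borel_measurable lebesgue" and hB: "\<And>x. x \<in> {0..1} \<Longrightarrow> \<bar>h x\<bar> \<le> B"
    and hH: "\<And>i x. i < n \<Longrightarrow> x \<in> cell n i \<Longrightarrow> h x = H i"
  shows "\<bar>(LINT x:A \<inter> {s..t}|lebesgue. h x)
           - (\<Sum>i\<in>cells_in n s t. H i * measure lebesgue (A \<inter> cell n i))\<bar> \<le> 2 * B / real n"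
proof -
  define I where "I = cells_in n s t"
  define R where "R = {s..t} - (\<Union>i\<in>I. cell n i)"
  have finI: "finite I" and In: "\<And>i. i \<in> I \<Longrightarrow> i < n" using cells_in_subset[of n s t]
    by (auto simp: I_def finite_subset)
  have B0: "0 \<le> B" using hB[of 0] by simp
  have R[measurable]: "R \<in> sets lebesgue" using finI by (auto simp: R_def)
  have cellI: "cell n i \<subseteq> {s..t}" if "i \<in> I" for i
    using that by (auto simp: I_def cells_in_def cell_def)
  have split: "indicator (A \<inter> {s..t}) x *\<^sub>R h x
      = (\<Sum>i\<in>I. indicator (A \<inter> cell n i) x * H i) + indicator (A \<inter> R) x *\<^sub>R h x" for x
  proof (cases "\<exists>j\<in>I. x \<in> cell n j")
    case True
    then obtain j where j: "j \<in> I" "x \<in> cell n j" by blast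
    have "(\<Sum>i\<in>I. indicator (A \<inter> cell n i) x * H i) = indicator (A \<inter> cell n j) x * H j"
      using j finI cells_disjoint[OF n] by (intro sum.remove[THEN trans]) (auto intro!: sum.neutral)
    thus ?thesis using j cellI[OF j(1)] hH[OF In[OF j(1)] j(2)] by (auto simp: R_def indicator_def)
  next
    case False
    thus ?thesis by (auto intro!: sum.neutral simp: R_def indicator_def)
  qed
  have cell_int: "integrable lebesgue (\<lambda>x. indicator (A \<inter> cell n i) x * H i)" for i
  proof -
    have "A \<inter> cell n i \<in> lmeasurable"
      by (rule lmeasurable_subset_Icc[of _ "real i / real n" "(real i + 1) / real n"])
         (auto simp: cell_def A)
    thus ?thesis by (simp add: integrable_indicator_lmeasurable)
  qed
  have AR: "A \<inter> R \<in> lmeasurable" using A R by (intro lmeasurable_subset_Icc[of _ s t]) (auto simp: R_def)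
  have "\<bar>h x\<bar> \<le> B" if "x \<in> A \<inter> R" for x using that hB st by (auto simp: R_def)
  note R_bound = set_integral_bounded[OF AR h this B0]
  have "(LINT x:A \<inter> {s..t}|lebesgue. h x)
      = (\<Sum>i\<in>I. H i * measure lebesgue (A \<inter> cell n i)) + (LINT x:A \<inter> R|lebesgue. h x)"
    unfolding set_lebesgue_integral_def split using cell_int R_bound(1)
    by (simp add: Bochner_Integration.integral_sum mult.commute set_integrable_def)
  moreover have "measure lebesgue (A \<inter> R) \<le> 2 / real n"
  proof -
    have "measure lebesgue (A \<inter> R) \<le> measure lebesgue R"
      using AR R by (intro measure_mono_fmeasurable) (auto intro: lmeasurable_subset_Icc[of _ s t] simp: R_def)
    thus ?thesis using uncovered_measure[OF n st] by (simp add: R_def I_def)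
  qed
  ultimately show ?thesis using R_bound(2) mult_left_mono[OF _ B0, of "measure lebesgue (A \<inter> R)" "2 / real n"]
    unfolding I_def by (simp add: mult.commute)
qed

section \<open>The finite algebra generated by the grid intervals\<close>

lemma intervalsN_subset: "intervalsN n \<subseteq> Pow {0..1}"
proof -
  have "{real i / real n .. (real i + 1) / real n} \<subseteq> {0..1}" if "i < n" for i
  proof -
    have "(real i + 1) / real n \<le> 1" using that by (simp add: divide_le_eq_1)
    thus ?thesis by auto
  qed
  thus ?thesis unfolding intervalsN_def by blast
qed

lemma sets_algN_measure: "sets (algN_measure n) = algN n"
  unfolding algN_measure_def algN_def using intervalsN_subset by (rule sets_measure_of)

lemma space_algN_measure: "space (algN_measure n) = {0..1}"
  unfolding algN_measure_def using intervalsN_subset by (rule space_measure_of)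

lemma finite_intervalsN: "finite (intervalsN n)"
proof -
  have "intervalsN n = (\<lambda>i. {real i / real n .. (real i + 1) / real n}) ` {..<n}"
    unfolding intervalsN_def by auto
  thus ?thesis by simp
qed

lemma sigma_sets_unseparated:
  assumes "S \<in> sigma_sets \<Omega> G" "x \<in> S" "y \<in> \<Omega>" "\<forall>g\<in>G. x \<in> g \<longleftrightarrow> y \<in> g"
  shows "y \<in> S"
  using assms
proof (induction arbitrary: x y rule: sigma_sets.induct)
  case (Compl a)
  have "y \<notin> a"
  proof
    assume "y \<in> a"
    hence "x \<in> a" using Compl.IH[of y x] Compl.prems by auto
    thus False using Compl.prems by blast
  qed
  thus ?case using Compl.prems by blast
next
  case (Union A)
  then obtain i where "x \<in> A i" by blast
  hence "y \<in> A i" using Union.IH Union.prems by blast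
  thus ?case by blast
qed auto

text \<open>A sigma-algebra generated by finitely many sets is finite: each of its sets is determined
  by the traces of its points on the generators.\<close>
lemma finite_sigma_sets:
  assumes fin: "finite G" and G: "G \<subseteq> Pow \<Omega>"
  shows "finite (sigma_sets \<Omega> G)"
proof -
  define trace where "trace x = {g \<in> G. x \<in> g}" for x
  have rep: "S = {x \<in> \<Omega>. trace x \<in> trace ` S}" if S: "S \<in> sigma_sets \<Omega> G" for S
  proof
    show "S \<subseteq> {x \<in> \<Omega>. trace x \<in> trace ` S}" using sigma_sets_into_sp[OF G S] by auto
    show "{x \<in> \<Omega>. trace x \<in> trace ` S} \<subseteq> S"
    proof clarify
      fix x y assume "x \<in> \<Omega>" "y \<in> S" "trace x = trace y"
      moreover from \<open>trace x = trace y\<close> have "\<forall>g\<in>G. y \<in> g \<longleftrightarrow> x \<in> g"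
        by (auto simp: trace_def set_eq_iff)
      ultimately show "x \<in> S" using sigma_sets_unseparated[OF S] by blast
    qed
  qed
  have "inj_on (\<lambda>S. trace ` S) (sigma_sets \<Omega> G)"
    by (rule inj_onI) (metis rep)
  moreover have "(\<lambda>S. trace ` S) ` sigma_sets \<Omega> G \<subseteq> Pow (Pow G)"
    by (auto simp: trace_def)
  ultimately show ?thesis using fin by (meson finite_Pow_iff finite_imageD finite_subset)
qed

lemma measurable_unseparated_eq:
  fixes f :: "'a \<Rightarrow> 'b::t1_space"
  assumes f: "f \<in> borel_measurable (sigma \<Omega> G)" and G: "G \<subseteq> Pow \<Omega>"
    and xy: "x \<in> \<Omega>" "y \<in> \<Omega>" "\<forall>g\<in>G. x \<in> g \<longleftrightarrow> y \<in> g"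
  shows "f x = f y"
proof -
  have "f -` {f x} \<inter> space (sigma \<Omega> G) \<in> sets (sigma \<Omega> G)"
    by (intro measurable_sets[OF f] borel_closed closed_singleton)
  hence "f -` {f x} \<inter> \<Omega> \<in> sigma_sets \<Omega> G"
    unfolding space_measure_of[OF G] sets_measure_of[OF G] .
  moreover have "x \<in> f -` {f x} \<inter> \<Omega>" using xy(1) by blast
  ultimately have "y \<in> f -` {f x} \<inter> \<Omega>" by (rule sigma_sets_unseparated[OF _ _ xy(2,3)])
  hence "f y = f x" by blast
  thus ?thesis by (rule sym)
qed

lemma sigma_sets_subset_sets:
  assumes \<Omega>: "\<Omega> \<in> sets M" and G: "G \<subseteq> sets M"
  shows "sigma_sets \<Omega> G \<subseteq> sets M"
proof
  fix S assume "S \<in> sigma_sets \<Omega> G"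
  thus "S \<in> sets M"
  proof (induction rule: sigma_sets.induct)
    case (Compl a)
    show ?case using \<Omega> Compl.IH by (rule sets.Diff)
  next
    case (Union A)
    thus ?case by (intro sets.countable_UN) auto
  qed (use G in auto)
qed

lemma algN_borel: "algN n \<subseteq> sets borel"
  unfolding algN_def by (rule sigma_sets_subset_sets) (auto simp: intervalsN_def)

lemma algN_subset_measSets: "algN n \<subseteq> measSets"
proof
  fix S assume S: "S \<in> algN n"
  hence "S \<in> sets lborel" using algN_borel by auto
  hence "S \<in> sets lebesgue" by (rule sets_completionI_sets)
  moreover have "S \<subseteq> {0..1}" using S sigma_sets_into_sp[OF intervalsN_subset] by (auto simp: algN_def)
  ultimately show "S \<in> measSets" by (simp add: measSets_def)
qed

lemma finite_algN: "finite (algN n)"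
  unfolding algN_def using finite_intervalsN intervalsN_subset by (rule finite_sigma_sets)

lemma cell_union_in_algN: "K \<subseteq> {..<n} \<Longrightarrow> cell_union n K \<in> algN n"
  unfolding sets_algN_measure[symmetric] cell_union_def
  by (intro sets.finite_UN) (auto intro!: sigma_sets.Basic simp: finite_subset sets_algN_measure algN_def intervalsN_def)

section \<open>Kernels measurable with respect to A_n^* \<otimes> A_n^*\<close>

lemma block_constant:
  assumes w: "(\<lambda>(x,y). w x y) \<in> borel_measurable (algN_measure n \<Otimes>\<^sub>M algN_measure n)"
    and n: "n \<ge> 1" and i: "i < n" and x: "x \<in> cell n i" "x' \<in> cell n i" and y: "y \<in> {0..1}"
  shows "w x y = (w x' y :: real)"
proof -
  have "(\<lambda>x. (x, y)) \<in> algN_measure n \<rightarrow>\<^sub>M algN_measure n \<Otimes>\<^sub>M algN_measure n"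
    using y by (intro measurable_Pair2') (simp add: space_algN_measure)
  from measurable_comp[OF this w]
  have "(\<lambda>x. w x y) \<in> borel_measurable (sigma {0..1} (intervalsN n))"
    by (simp add: o_def algN_measure_def)
  moreover have "x \<in> {0..1}" "x' \<in> {0..1}" using cell_subset_unit[OF i] x by auto
  moreover have "\<forall>g\<in>intervalsN n. x \<in> g \<longleftrightarrow> x' \<in> g"
    using cell_in_Icc_iff[OF n x(1)] cell_in_Icc_iff[OF n x(2)] by (auto simp: intervalsN_def)
  ultimately show ?thesis by (rule measurable_unseparated_eq[OF _ intervalsN_subset])
qed

definition zext :: "(real \<Rightarrow> real \<Rightarrow> real) \<Rightarrow> real \<Rightarrow> real \<Rightarrow> real" where
  "zext w x y = (if x \<in> {0..1} \<and> y \<in> {0..1} then w x y else 0)"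

lemma zext_bound: "\<forall>x\<in>{0..1}. \<forall>y\<in>{0..1}. \<bar>w x y\<bar> \<le> c \<Longrightarrow> 0 \<le> c \<Longrightarrow> \<bar>zext w x y\<bar> \<le> c"
  by (simp add: zext_def)

corollary zext_cell_centre:
  assumes w: "(\<lambda>(x,y). w x y) \<in> borel_measurable (algN_measure n \<Otimes>\<^sub>M algN_measure n)"
    and n: "n \<ge> 1" and i: "i < n" and x: "x \<in> cell n i"
  shows "zext w x y = zext w (centre n i) y"
proof -
  have "x \<in> {0..1}" "centre n i \<in> {0..1}"
    using cell_subset_unit[OF i] x centre_in_cell[OF n, of i] by auto
  thus ?thesis using block_constant[OF w n i x centre_in_cell[OF n]] by (simp add: zext_def)
qed

lemma sets_pair_measure_subset_borel:
  fixes M :: "'a::second_countable_topology measure" and N :: "'b::second_countable_topology measure"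
  assumes M: "sets M \<subseteq> sets borel" and N: "sets N \<subseteq> sets borel"
  shows "sets (M \<Otimes>\<^sub>M N) \<subseteq> sets (borel :: ('a \<times> 'b) measure)"
proof -
  have rect: "a \<times> b \<in> sets borel" if "a \<in> sets M" "b \<in> sets N" for a b
    using that M N by (metis borel_prod pair_measureI subsetD)
  show ?thesis unfolding sets_pair_measure
    by (rule sigma_sets_subset_sets) (auto intro: rect)
qed

lemma zero_extension_borel:
  fixes f :: "'a::topological_space \<Rightarrow> real"
  assumes f: "f \<in> borel_measurable P" and P: "sets P \<subseteq> sets borel"
  shows "(\<lambda>x. if x \<in> space P then f x else 0) \<in> borel_measurable borel"
proof -
  have sp: "space P \<in> sets borel" using P sets.top by blast
  have "f \<in> borel_measurable (restrict_space borel (space P))"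
  proof (rule measurableI)
    fix A :: "real set" assume "A \<in> sets borel"
    hence "f -` A \<inter> space P \<in> sets borel" using measurable_sets[OF f] P by blast
    thus "f -` A \<inter> space (restrict_space borel (space P)) \<in> sets (restrict_space borel (space P))"
      by (auto simp: space_restrict_space sets_restrict_space)
  qed simp
  hence "(\<lambda>x. indicator (space P) x *\<^sub>R f x) \<in> borel_measurable borel"
    using sp by (subst (asm) borel_measurable_restrict_space_iff) auto
  moreover have "(\<lambda>x. indicator (space P) x *\<^sub>R f x) = (\<lambda>x. if x \<in> space P then f x else 0)"
    by (auto simp: indicator_def)
  ultimately show ?thesis by simp
qed

lemma zext_borel:
  assumes w: "(\<lambda>(x,y). w x y) \<in> borel_measurable (algN_measure n \<Otimes>\<^sub>M algN_measure n)"
  shows "(\<lambda>p. zext w (fst p) (snd p)) \<in> borel_measurable borel"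
proof -
  have "sets (algN_measure n \<Otimes>\<^sub>M algN_measure n) \<subseteq> sets borel"
    by (intro sets_pair_measure_subset_borel) (simp_all add: sets_algN_measure algN_borel)
  moreover have "(\<lambda>p. zext w (fst p) (snd p))
      = (\<lambda>p. if p \<in> space (algN_measure n \<Otimes>\<^sub>M algN_measure n) then (case p of (x, y) \<Rightarrow> w x y) else 0)"
    by (auto simp: fun_eq_iff zext_def space_pair_measure space_algN_measure)
  ultimately show ?thesis using zero_extension_borel[OF w] by simp
qed

definition tri :: "(real \<times> real) set" where
  "tri = {(y,z). 0 \<le> y \<and> y < z \<and> z \<le> 1}"

lemma tri_subset_square: "tri \<subseteq> cbox (0, 0) (1, 1)"
  by (auto simp: tri_def cbox_Pair_eq)

lemma tri_lmeasurable: "tri \<in> lmeasurable"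
proof (rule bounded_set_imp_lmeasurable)
  have eq: "tri = {p. 0 \<le> fst p} \<inter> {p. fst p < snd p} \<inter> {p::real \<times> real. snd p \<le> 1}"
    by (auto simp: tri_def)
  have "tri \<in> sets borel" unfolding eq
    by (intro sets.Int borel_closed borel_open closed_Collect_le open_Collect_less continuous_intros)
  hence "tri \<in> sets lborel" by simp
  thus "tri \<in> sets lebesgue" by (rule sets_completionI_sets)
  show "bounded tri" by (rule bounded_subset[OF bounded_cbox tri_subset_square])
qed

lemma tri_measure_le: "measure lebesgue tri \<le> 1"
proof -
  have "measure lebesgue tri \<le> measure lebesgue (cbox (0::real, 0::real) (1, 1))"
    using tri_subset_square tri_lmeasurable by (intro measure_mono_fmeasurable lmeasurable_cbox) auto
  also have "\<dots> = 1" by (simp add: content_Pair)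
  finally show ?thesis .
qed

lemma tri_set_integrable:
  fixes f :: "real \<times> real \<Rightarrow> real"
  assumes f: "f \<in> borel_measurable lebesgue" and K: "\<And>p. p \<in> tri \<Longrightarrow> \<bar>f p\<bar> \<le> K"
  shows "set_integrable lebesgue tri f"
proof (rule set_integrable_bound)
  show "set_integrable lebesgue tri (\<lambda>_. K)"
    using integrable_indicator_lmeasurable[OF tri_lmeasurable] by (simp add: set_integrable_def)
  show "set_borel_measurable lebesgue tri f"
    unfolding set_borel_measurable_def using tri_lmeasurable
    by (intro borel_measurable_scaleR borel_measurable_indicator f) auto
  show "AE p in lebesgue. p \<in> tri \<longrightarrow> norm (f p) \<le> norm K"
    using K by (intro AE_I2) force
qed

text \<open>Uniformly close integrands have close integrals over the triangle (its area is \<le> 1).\<close>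
lemma tri_integral_close:
  fixes f g :: "real \<times> real \<Rightarrow> real"
  assumes f: "set_integrable lebesgue tri f" and g: "set_integrable lebesgue tri g"
    and fg: "\<And>p. p \<in> tri \<Longrightarrow> \<bar>f p - g p\<bar> \<le> e" and e: "0 \<le> e"
  shows "\<bar>(LINT p:tri|lebesgue. f p) - (LINT p:tri|lebesgue. g p)\<bar> \<le> e"
proof -
  have const: "set_integrable lebesgue tri (\<lambda>_. e)"
    using integrable_indicator_lmeasurable[OF tri_lmeasurable] by (simp add: set_integrable_def)
  have "(LINT p:tri|lebesgue. f p) \<le> (LINT p:tri|lebesgue. g p + e)"
    using fg by (intro set_integral_mono f set_integral_add g const) force
  moreover have "(LINT p:tri|lebesgue. g p) \<le> (LINT p:tri|lebesgue. f p + e)"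
    using fg by (intro set_integral_mono f set_integral_add g const) force
  moreover have "(LINT p:tri|lebesgue. e) \<le> e"
    using mult_left_le[OF tri_measure_le e] by (simp add: set_lebesgue_integral_def mult.commute)
  ultimately show ?thesis using f g const by (simp add: set_integral_add)
qed

section \<open>Functionals of the shape of \<Gamma>\<close>

text \<open>Both \<Gamma> and its discretisation have the form below, where F s t u v stands for the
  integral over [s,t] of the difference of the kernel columns at u and v.\<close>
definition gamma_form :: "(real \<Rightarrow> real \<Rightarrow> real \<Rightarrow> real \<Rightarrow> real) \<Rightarrow> real" where
  "gamma_form F = (LINT p:tri|lebesgue. max 0 (F 0 (fst p) (snd p) (fst p)))
                + (LINT p:tri|lebesgue. max 0 (F (snd p) 1 (fst p) (snd p)))"

definition tri_regular :: "(real \<Rightarrow> real \<Rightarrow> real \<Rightarrow> real \<Rightarrow> real) \<Rightarrow> bool" where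
  "tri_regular F \<longleftrightarrow>
     (\<lambda>p. F 0 (fst p) (snd p) (fst p)) \<in> borel_measurable lebesgue \<and>
     (\<lambda>p. F (snd p) 1 (fst p) (snd p)) \<in> borel_measurable lebesgue \<and>
     (\<exists>K. \<forall>s t u v. 0 \<le> s \<longrightarrow> t \<le> 1 \<longrightarrow> \<bar>F s t u v\<bar> \<le> K)"

lemma tri_regular_integrable:
  assumes F: "tri_regular F"
  shows "set_integrable lebesgue tri (\<lambda>p. max 0 (F 0 (fst p) (snd p) (fst p)))"
    and "set_integrable lebesgue tri (\<lambda>p. max 0 (F (snd p) 1 (fst p) (snd p)))"
proof -
  obtain K where K: "\<And>s t u v. 0 \<le> s \<Longrightarrow> t \<le> 1 \<Longrightarrow> \<bar>F s t u v\<bar> \<le> K"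
    using F unfolding tri_regular_def by blast
  have max_le: "\<bar>max 0 x\<bar> \<le> K" if "\<bar>x\<bar> \<le> K" for x :: real
    using that unfolding max_def by auto
  show "set_integrable lebesgue tri (\<lambda>p. max 0 (F 0 (fst p) (snd p) (fst p)))"
  proof (rule tri_set_integrable)
    show "(\<lambda>p. max 0 (F 0 (fst p) (snd p) (fst p))) \<in> borel_measurable lebesgue"
      using F unfolding tri_regular_def by (intro borel_measurable_max borel_measurable_const) simp
    show "\<bar>max 0 (F 0 (fst p) (snd p) (fst p))\<bar> \<le> K" if "p \<in> tri" for p
      using that by (intro max_le K) (auto simp: tri_def)
  qed
  show "set_integrable lebesgue tri (\<lambda>p. max 0 (F (snd p) 1 (fst p) (snd p)))"
  proof (rule tri_set_integrable)
    show "(\<lambda>p. max 0 (F (snd p) 1 (fst p) (snd p))) \<in> borel_measurable lebesgue"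
      using F unfolding tri_regular_def by (intro borel_measurable_max borel_measurable_const) simp
    show "\<bar>max 0 (F (snd p) 1 (fst p) (snd p))\<bar> \<le> K" if "p \<in> tri" for p
      using that by (intro max_le K) (auto simp: tri_def)
  qed
qed

lemma gamma_form_close:
  assumes G: "tri_regular G"
    and F1: "(\<lambda>p. F 0 (fst p) (snd p) (fst p)) \<in> borel_measurable lebesgue"
    and F2: "(\<lambda>p. F (snd p) 1 (fst p) (snd p)) \<in> borel_measurable lebesgue"
    and FG: "\<And>s t u v. 0 \<le> s \<Longrightarrow> t \<le> 1 \<Longrightarrow> \<bar>F s t u v - G s t u v\<bar> \<le> e"
  shows "tri_regular F" and "\<bar>gamma_form F - gamma_form G\<bar> \<le> 2 * e"
proof -
  obtain K where K: "\<And>s t u v. 0 \<le> s \<Longrightarrow> t \<le> 1 \<Longrightarrow> \<bar>G s t u v\<bar> \<le> K"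
    using G unfolding tri_regular_def by blast
  have "\<bar>F s t u v\<bar> \<le> K + e" if "0 \<le> s" "t \<le> 1" for s t u v
    using K[OF that, of u v] FG[OF that, of u v] by linarith
  thus F: "tri_regular F" using F1 F2 unfolding tri_regular_def by blast
  have e: "0 \<le> e" using FG[of 0 1 0 0] by linarith
  have maxdiff: "\<bar>max 0 a - max 0 b\<bar> \<le> e" if "\<bar>a - b\<bar> \<le> e" for a b :: real
    using that e by linarith
  have "\<bar>(LINT p:tri|lebesgue. max 0 (F 0 (fst p) (snd p) (fst p)))
         - (LINT p:tri|lebesgue. max 0 (G 0 (fst p) (snd p) (fst p)))\<bar> \<le> e"
    by (intro tri_integral_close tri_regular_integrable F G e maxdiff FG) (auto simp: tri_def)
  moreover have "\<bar>(LINT p:tri|lebesgue. max 0 (F (snd p) 1 (fst p) (snd p)))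
         - (LINT p:tri|lebesgue. max 0 (G (snd p) 1 (fst p) (snd p)))\<bar> \<le> e"
    by (intro tri_integral_close tri_regular_integrable F G e maxdiff FG) (auto simp: tri_def)
  ultimately show "\<bar>gamma_form F - gamma_form G\<bar> \<le> 2 * e"
    unfolding gamma_form_def by linarith
qed

lemma max0_convex:
  fixes x y s :: real
  assumes s: "0 \<le> s" "s \<le> 1"
  shows "max 0 ((1 - s) * x + s * y) \<le> (1 - s) * max 0 x + s * max 0 y"
proof -
  have "(1 - s) * x \<le> (1 - s) * max 0 x" "s * y \<le> s * max 0 y"
    using s by (intro mult_left_mono; simp)+
  moreover have "0 \<le> (1 - s) * max 0 x" "0 \<le> s * max 0 y" using s by simp_all
  ultimately show ?thesis by simp
qed

lemma tri_regular_combination: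
  assumes F0: "tri_regular F0" and F1: "tri_regular F1" and s: "0 \<le> s" "s \<le> 1"
  shows "tri_regular (\<lambda>a b u v. (1 - s) * F0 a b u v + s * F1 a b u v)"
proof -
  obtain K0 K1 where K: "\<And>a b u v. 0 \<le> a \<Longrightarrow> b \<le> 1 \<Longrightarrow> \<bar>F0 a b u v\<bar> \<le> K0"
      "\<And>a b u v. 0 \<le> a \<Longrightarrow> b \<le> 1 \<Longrightarrow> \<bar>F1 a b u v\<bar> \<le> K1"
    using F0 F1 unfolding tri_regular_def by blast
  have "\<bar>(1 - s) * F0 a b u v + s * F1 a b u v\<bar> \<le> (1 - s) * K0 + s * K1"
    if "0 \<le> a" "b \<le> 1" for a b u v
  proof -
    have "\<bar>(1 - s) * F0 a b u v + s * F1 a b u v\<bar> \<le> (1 - s) * \<bar>F0 a b u v\<bar> + s * \<bar>F1 a b u v\<bar>"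
      using s abs_triangle_ineq[of "(1 - s) * F0 a b u v" "s * F1 a b u v"] by (simp add: abs_mult)
    also have "\<dots> \<le> (1 - s) * K0 + s * K1"
      using s K[OF that, of u v] by (intro add_mono mult_left_mono) simp_all
    finally show ?thesis .
  qed
  moreover have "(\<lambda>p. (1 - s) * F0 0 (fst p) (snd p) (fst p) + s * F1 0 (fst p) (snd p) (fst p))
        \<in> borel_measurable lebesgue"
      "(\<lambda>p. (1 - s) * F0 (snd p) 1 (fst p) (snd p) + s * F1 (snd p) 1 (fst p) (snd p))
        \<in> borel_measurable lebesgue"
    using F0 F1 unfolding tri_regular_def
    by (intro borel_measurable_add borel_measurable_times borel_measurable_const; simp)+
  ultimately show ?thesis unfolding tri_regular_def by blast
qed

text \<open>The functional is convex: max 0 is convex and integration is monotone and linear.\<close>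
lemma gamma_form_convex:
  assumes F0: "tri_regular F0" and F1: "tri_regular F1" and s: "0 \<le> s" "s \<le> 1"
  shows "gamma_form (\<lambda>a b u v. (1 - s) * F0 a b u v + s * F1 a b u v)
           \<le> (1 - s) * gamma_form F0 + s * gamma_form F1"
proof -
  let ?F = "\<lambda>a b u v. (1 - s) * F0 a b u v + s * F1 a b u v"
  note F = tri_regular_combination[OF F0 F1 s]
  have half: "(LINT p:tri|lebesgue. max 0 (?F (a p) (b p) (u p) (v p)))
      \<le> (1 - s) * (LINT p:tri|lebesgue. max 0 (F0 (a p) (b p) (u p) (v p)))
        + s * (LINT p:tri|lebesgue. max 0 (F1 (a p) (b p) (u p) (v p)))"
    if I: "set_integrable lebesgue tri (\<lambda>p. max 0 (?F (a p) (b p) (u p) (v p)))"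
       and I0: "set_integrable lebesgue tri (\<lambda>p. max 0 (F0 (a p) (b p) (u p) (v p)))"
       and I1: "set_integrable lebesgue tri (\<lambda>p. max 0 (F1 (a p) (b p) (u p) (v p)))" for a b u v
  proof -
    let ?G = "\<lambda>p. (1 - s) * max 0 (F0 (a p) (b p) (u p) (v p)) + s * max 0 (F1 (a p) (b p) (u p) (v p))"
    have IG: "set_integrable lebesgue tri ?G" using I0 I1 by (intro set_integral_add(1)) simp_all
    have "(LINT p:tri|lebesgue. max 0 (?F (a p) (b p) (u p) (v p))) \<le> (LINT p:tri|lebesgue. ?G p)"
      using max0_convex[OF s] by (intro set_integral_mono I IG)
    also have "\<dots> = (1 - s) * (LINT p:tri|lebesgue. max 0 (F0 (a p) (b p) (u p) (v p)))
        + s * (LINT p:tri|lebesgue. max 0 (F1 (a p) (b p) (u p) (v p)))"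
      using I0 I1 by (simp add: set_integral_add(2))
    finally show ?thesis .
  qed
  show ?thesis
    using half[OF tri_regular_integrable(1)[OF F] tri_regular_integrable(1)[OF F0]
                 tri_regular_integrable(1)[OF F1]]
          half[OF tri_regular_integrable(2)[OF F] tri_regular_integrable(2)[OF F0]
                 tri_regular_integrable(2)[OF F1]]
    unfolding gamma_form_def by (simp add: algebra_simps)
qed

section \<open>Maximising a convex function over a box\<close>

text \<open>A convex function is bounded on a segment by its value at one of the endpoints; applied
  along one coordinate this moves that coordinate to an end of the box.\<close>
lemma convex_coordinate_step:
  fixes f :: "(nat \<Rightarrow> real) \<Rightarrow> real"
  assumes convex: "\<And>\<beta>0 \<beta>1 s. 0 \<le> s \<Longrightarrow> s \<le> 1 \<Longrightarrow>
      f (\<lambda>i. (1 - s) * \<beta>0 i + s * \<beta>1 i) \<le> (1 - s) * f \<beta>0 + s * f \<beta>1"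
    and r: "0 < r" and \<beta>: "0 \<le> \<beta> k" "\<beta> k \<le> r"
  shows "f \<beta> \<le> max (f (\<beta>(k := 0))) (f (\<beta>(k := r)))"
proof -
  define s where "s = \<beta> k / r"
  have s: "0 \<le> s" "s \<le> 1" using r \<beta> by (simp_all add: s_def)
  have "\<beta> = (\<lambda>i. (1 - s) * (\<beta>(k := 0)) i + s * (\<beta>(k := r)) i)"
    using r by (auto simp: fun_eq_iff s_def algebra_simps)
  hence "f \<beta> \<le> (1 - s) * f (\<beta>(k := 0)) + s * f (\<beta>(k := r))"
    using convex[OF s] by metis
  also have "\<dots> \<le> (1 - s) * max (f (\<beta>(k := 0))) (f (\<beta>(k := r))) + s * max (f (\<beta>(k := 0))) (f (\<beta>(k := r)))"
    using s by (intro add_mono mult_left_mono) auto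
  finally show ?thesis by (simp add: algebra_simps)
qed

lemma convex_box_vertex:
  fixes f :: "(nat \<Rightarrow> real) \<Rightarrow> real"
  assumes convex: "\<And>\<beta>0 \<beta>1 s. 0 \<le> s \<Longrightarrow> s \<le> 1 \<Longrightarrow>
      f (\<lambda>i. (1 - s) * \<beta>0 i + s * \<beta>1 i) \<le> (1 - s) * f \<beta>0 + s * f \<beta>1"
    and local: "\<And>\<alpha> \<beta>. (\<And>i. i < n \<Longrightarrow> \<alpha> i = \<beta> i) \<Longrightarrow> f \<alpha> = f \<beta>"
    and r: "0 < r" and box: "\<And>i. i < n \<Longrightarrow> 0 \<le> \<alpha> i \<and> \<alpha> i \<le> r"
  shows "\<exists>K\<subseteq>{..<n}. f \<alpha> \<le> f (\<lambda>i. if i \<in> K then r else 0)"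
proof -
  text \<open>Invariant: the first k coordinates have been moved to the ends of the box.\<close>
  have "\<exists>\<beta>. (\<forall>i<n. 0 \<le> \<beta> i \<and> \<beta> i \<le> r) \<and> (\<forall>i<k. \<beta> i = 0 \<or> \<beta> i = r) \<and> f \<alpha> \<le> f \<beta>"
    if "k \<le> n" for k
    using that
  proof (induction k)
    case 0
    show ?case using box by blast
  next
    case (Suc k)
    then obtain \<beta> where \<beta>: "\<forall>i<n. 0 \<le> \<beta> i \<and> \<beta> i \<le> r" "\<forall>i<k. \<beta> i = 0 \<or> \<beta> i = r" "f \<alpha> \<le> f \<beta>"
      by auto
    have "k < n" using Suc.prems by simp
    hence step: "f \<beta> \<le> max (f (\<beta>(k := 0))) (f (\<beta>(k := r)))"
      using \<beta>(1) by (intro convex_coordinate_step convex r) auto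
    have ends: "(\<forall>i<n. 0 \<le> \<gamma> i \<and> \<gamma> i \<le> r) \<and> (\<forall>i<Suc k. \<gamma> i = 0 \<or> \<gamma> i = r)"
      if "\<gamma> = \<beta>(k := 0) \<or> \<gamma> = \<beta>(k := r)" for \<gamma>
      using that \<beta> r by (auto simp: less_Suc_eq)
    have "f \<alpha> \<le> f (\<beta>(k := 0)) \<or> f \<alpha> \<le> f (\<beta>(k := r))" using \<beta>(3) step by linarith
    thus ?case using ends by blast
  qed
  then obtain \<beta> where \<beta>: "\<forall>i<n. \<beta> i = 0 \<or> \<beta> i = r" "f \<alpha> \<le> f \<beta>" by blast
  define K where "K = {i. i < n \<and> \<beta> i = r}"
  have "f \<beta> = f (\<lambda>i. if i \<in> K then r else 0)"
    using \<beta>(1) by (intro local) (auto simp: K_def)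
  moreover have "K \<subseteq> {..<n}" by (auto simp: K_def)
  ultimately show ?thesis using \<beta>(2) by auto
qed

definition col_integral ::
    "(real \<Rightarrow> real \<Rightarrow> real) \<Rightarrow> real set \<Rightarrow> real \<Rightarrow> real \<Rightarrow> real \<Rightarrow> real \<Rightarrow> real" where
  "col_integral W A s t u v = (LINT x:A \<inter> {s..t}|lebesgue. W x u - W x v)"

definition cell_sum ::
    "nat \<Rightarrow> (real \<Rightarrow> real \<Rightarrow> real) \<Rightarrow> (nat \<Rightarrow> real) \<Rightarrow> real \<Rightarrow> real \<Rightarrow> real \<Rightarrow> real \<Rightarrow> real" where
  "cell_sum n W \<alpha> s t u v = (\<Sum>i\<in>cells_in n s t. (W (centre n i) u - W (centre n i) v) * \<alpha> i)"

definition cell_mass :: "nat \<Rightarrow> real set \<Rightarrow> nat \<Rightarrow> real" where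
  "cell_mass n A i = measure lebesgue (A \<inter> cell n i)"

text \<open>\<Gamma>(w,A) is the functional of the column integrals of the zero extension of w (which
  agrees with w wherever \<Gamma> evaluates it).\<close>
lemma GammaW_eq_gamma_form:
  assumes A: "A \<in> measSets"
  shows "GammaW w A = gamma_form (col_integral (zext w) A)"
proof -
  have A01: "A \<subseteq> {0..1}" using A by (simp add: measSets_def)
  have "col_integral (zext w) A s t u v = (LINT x:A \<inter> {s..t}|lebesgue. w x u - w x v)"
    if "u \<in> {0..1}" "v \<in> {0..1}" for s t u v
    unfolding col_integral_def using that A01 A
    by (intro set_lebesgue_integral_cong) (auto simp: zext_def measSets_def)
  moreover have "fst p \<in> {0..1}" "snd p \<in> {0..1}" if "p \<in> tri" for p
    using that by (auto simp: tri_def)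
  ultimately show ?thesis unfolding GammaW_def gamma_form_def tri_def[symmetric]
    by (intro arg_cong2[where f="(+)"] set_lebesgue_integral_cong tri_lmeasurable[THEN fmeasurableD])
       simp_all
qed

lemma borel_measurable_sections:
  assumes "(\<lambda>p. W (fst p) (snd p)) \<in> borel_measurable (borel :: (real \<times> real) measure)"
  shows "W c \<in> borel_measurable (borel :: real measure)"
    and "(\<lambda>x. W x c) \<in> borel_measurable (borel :: real measure)"
proof -
  have W2: "(\<lambda>p. W (fst p) (snd p)) \<in> borel_measurable (borel \<Otimes>\<^sub>M borel)"
    using assms by (simp add: borel_prod)
  from measurable_comp[OF measurable_Pair1'[of c borel borel] W2]
  show "W c \<in> borel_measurable borel" by (simp add: o_def)
  from measurable_comp[OF measurable_Pair2'[of c borel borel] W2]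
  show "(\<lambda>x. W x c) \<in> borel_measurable borel" by (simp add: o_def)
qed

lemma col_integral_measurable:
  fixes W :: "real \<Rightarrow> real \<Rightarrow> real"
  assumes W: "(\<lambda>p. W (fst p) (snd p)) \<in> borel_measurable borel" and A[measurable]: "A \<in> sets lebesgue"
    and [measurable]: "a \<in> borel_measurable M" "b \<in> borel_measurable M"
      "u \<in> borel_measurable M" "v \<in> borel_measurable M"
  shows "(\<lambda>p. col_integral W A (a p) (b p) (u p) (v p)) \<in> borel_measurable M"
proof -
  interpret L: sigma_finite_measure "lebesgue :: real measure" by (rule sigma_finite_lebesgue)
  have W2: "(\<lambda>q. W (fst q) (snd q)) \<in> borel_measurable (borel \<Otimes>\<^sub>M borel)"
    using W by (simp add: borel_prod)
  have [measurable]: "(\<lambda>q. snd q) \<in> borel_measurable (M \<Otimes>\<^sub>M lebesgue)"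
    using measurable_compose[OF measurable_snd id_borel_measurable_lebesgue] by (simp add: id_def)
  have [measurable]: "(\<lambda>q. W (snd q) (f (fst q))) \<in> borel_measurable (M \<Otimes>\<^sub>M lebesgue)"
    if [measurable]: "f \<in> borel_measurable M" for f
  proof -
    have "(\<lambda>q. (snd q, f (fst q))) \<in> M \<Otimes>\<^sub>M lebesgue \<rightarrow>\<^sub>M borel \<Otimes>\<^sub>M borel" by measurable
    from measurable_comp[OF this W2] show ?thesis by (simp add: o_def)
  qed
  have "(\<lambda>(p, x). indicator (A \<inter> {a p..b p}) x *\<^sub>R (W x (u p) - W x (v p)))
      = (\<lambda>q. indicator A (snd q) * (if a (fst q) \<le> snd q \<and> snd q \<le> b (fst q) then 1 else 0)
             * (W (snd q) (u (fst q)) - W (snd q) (v (fst q))))"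
    by (auto simp: fun_eq_iff indicator_def)
  also have "\<dots> \<in> borel_measurable (M \<Otimes>\<^sub>M lebesgue)" by measurable
  finally show ?thesis
    unfolding col_integral_def set_lebesgue_integral_def by (rule L.borel_measurable_lebesgue_integral)
qed

lemma cell_sum_measurable:
  fixes W :: "real \<Rightarrow> real \<Rightarrow> real"
  assumes W: "(\<lambda>p. W (fst p) (snd p)) \<in> borel_measurable borel"
    and [measurable]: "a \<in> borel_measurable M" "b \<in> borel_measurable M"
      "u \<in> borel_measurable M" "v \<in> borel_measurable M"
  shows "(\<lambda>p. cell_sum n W \<alpha> (a p) (b p) (u p) (v p)) \<in> borel_measurable M"
proof -
  have [measurable]: "(\<lambda>p. W c (f p)) \<in> borel_measurable M" if "f \<in> borel_measurable M" for c f
    using measurable_compose[OF that borel_measurable_sections(1)[OF W]] .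
  have "cell_sum n W \<alpha> s t x y = (\<Sum>i<n. if s \<le> real i / real n \<and> (real i + 1) / real n \<le> t
          then (W (centre n i) x - W (centre n i) y) * \<alpha> i else 0)" for s t x y
    unfolding cell_sum_def cells_in_def by (subst sum.inter_filter[symmetric]) (auto intro: sum.cong)
  thus ?thesis by simp
qed

lemma fst_snd_lebesgue_measurable:
  "fst \<in> borel_measurable (lebesgue :: (real \<times> real) measure)"
  "snd \<in> borel_measurable (lebesgue :: (real \<times> real) measure)"
  by (auto intro!: measurable_completion borel_measurable_continuous_onI
      continuous_on_fst continuous_on_snd continuous_on_id)

lemma cell_sum_bound:
  assumes W: "\<And>a b. \<bar>W a b\<bar> \<le> c"
  shows "\<bar>cell_sum n W \<alpha> s t u v\<bar> \<le> (\<Sum>i<n. 2 * c * \<bar>\<alpha> i\<bar>)"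
proof -
  have "\<bar>cell_sum n W \<alpha> s t u v\<bar> \<le> (\<Sum>i\<in>cells_in n s t. \<bar>(W (centre n i) u - W (centre n i) v) * \<alpha> i\<bar>)"
    unfolding cell_sum_def by (rule sum_abs)
  also have "\<dots> \<le> (\<Sum>i\<in>cells_in n s t. 2 * c * \<bar>\<alpha> i\<bar>)"
  proof (rule sum_mono)
    fix i
    have "\<bar>W (centre n i) u - W (centre n i) v\<bar> \<le> 2 * c"
      using W[of "centre n i" u] W[of "centre n i" v] by linarith
    thus "\<bar>(W (centre n i) u - W (centre n i) v) * \<alpha> i\<bar> \<le> 2 * c * \<bar>\<alpha> i\<bar>"
      by (simp add: abs_mult mult_right_mono)
  qed
  also have "\<dots> \<le> (\<Sum>i<n. 2 * c * \<bar>\<alpha> i\<bar>)"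
    using cells_in_subset W[of 0 0] by (intro sum_mono2) auto
  finally show ?thesis .
qed

lemma tri_regular_cell_sum:
  assumes W: "(\<lambda>p. W (fst p) (snd p)) \<in> borel_measurable borel" and Wc: "\<And>a b. \<bar>W a b\<bar> \<le> c"
  shows "tri_regular (cell_sum n W \<alpha>)"
  unfolding tri_regular_def using cell_sum_bound[OF Wc]
  by (intro conjI exI allI impI cell_sum_measurable[OF W] fst_snd_lebesgue_measurable
      borel_measurable_const)

lemma col_integral_approx:
  assumes n: "n \<ge> 1" and W: "(\<lambda>p. W (fst p) (snd p)) \<in> borel_measurable borel"
    and Wc: "\<And>a b. \<bar>W a b\<bar> \<le> c"
    and Wcell: "\<And>i x y. i < n \<Longrightarrow> x \<in> cell n i \<Longrightarrow> W x y = W (centre n i) y"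
    and A: "A \<in> sets lebesgue" and st: "0 \<le> s" "t \<le> 1"
  shows "\<bar>col_integral W A s t u v - cell_sum n W (cell_mass n A) s t u v\<bar> \<le> 4 * c / real n"
proof -
  have "\<bar>col_integral W A s t u v - cell_sum n W (cell_mass n A) s t u v\<bar> \<le> 2 * (2 * c) / real n"
    unfolding col_integral_def cell_sum_def cell_mass_def
  proof (rule cellwise_integral_approx[OF n st A])
    show "(\<lambda>x. W x u - W x v) \<in> borel_measurable lebesgue"
      using borel_measurable_sections(2)[OF W]
      by (intro borel_measurable_diff measurable_completion) simp_all
    show "\<bar>W x u - W x v\<bar> \<le> 2 * c" for x using Wc[of x u] Wc[of x v] by linarith
    show "W x u - W x v = W (centre n i) u - W (centre n i) v" if "i < n" "x \<in> cell n i" for i x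
      using Wcell[OF that] by simp
  qed
  thus ?thesis by simp
qed

lemma gamma_form_discretisation:
  assumes n: "n \<ge> 1" and W: "(\<lambda>p. W (fst p) (snd p)) \<in> borel_measurable borel"
    and Wc: "\<And>a b. \<bar>W a b\<bar> \<le> c"
    and Wcell: "\<And>i x y. i < n \<Longrightarrow> x \<in> cell n i \<Longrightarrow> W x y = W (centre n i) y"
    and A: "A \<in> sets lebesgue"
  shows "\<bar>gamma_form (col_integral W A) - gamma_form (cell_sum n W (cell_mass n A))\<bar> \<le> 8 * c / real n"
proof -
  have "\<bar>gamma_form (col_integral W A) - gamma_form (cell_sum n W (cell_mass n A))\<bar> \<le> 2 * (4 * c / real n)"
    using col_integral_approx[OF n W Wc Wcell A]
    by (intro gamma_form_close(2) tri_regular_cell_sum[OF W Wc] col_integral_measurable[OF W A]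
        fst_snd_lebesgue_measurable borel_measurable_const)
  thus ?thesis by simp
qed

lemma discretised_convex:
  assumes W: "(\<lambda>p. W (fst p) (snd p)) \<in> borel_measurable borel" and Wc: "\<And>a b. \<bar>W a b\<bar> \<le> c"
    and s: "0 \<le> s" "s \<le> 1"
  shows "gamma_form (cell_sum n W (\<lambda>i. (1 - s) * \<beta>0 i + s * \<beta>1 i))
           \<le> (1 - s) * gamma_form (cell_sum n W \<beta>0) + s * gamma_form (cell_sum n W \<beta>1)"
proof -
  have "cell_sum n W (\<lambda>i. (1 - s) * \<beta>0 i + s * \<beta>1 i)
      = (\<lambda>a b u v. (1 - s) * cell_sum n W \<beta>0 a b u v + s * cell_sum n W \<beta>1 a b u v)"
    by (simp add: fun_eq_iff cell_sum_def sum_distrib_left sum.distrib[symmetric] algebra_simps)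
  thus ?thesis using gamma_form_convex[OF tri_regular_cell_sum[OF W Wc] tri_regular_cell_sum[OF W Wc] s]
    by simp
qed

lemma cell_sum_local:
  assumes "\<And>i. i < n \<Longrightarrow> \<alpha> i = \<beta> i" shows "cell_sum n W \<alpha> = cell_sum n W \<beta>"
proof -
  have "\<alpha> i = \<beta> i" if "i \<in> cells_in n s t" for i s t using assms that cells_in_subset by blast
  thus ?thesis by (simp add: cell_sum_def fun_eq_iff)
qed

lemma cell_mass_box:
  assumes n: "n \<ge> 1" and A: "A \<in> sets lebesgue"
  shows "0 \<le> cell_mass n A i \<and> cell_mass n A i \<le> 1 / real n"
proof -
  have "cell n i \<in> lmeasurable"
    by (rule lmeasurable_subset_Icc[of _ "real i / real n" "(real i + 1) / real n"]) (auto simp: cell_def)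
  hence "measure lebesgue (A \<inter> cell n i) \<le> measure lebesgue (cell n i)"
    using A by (intro measure_mono_fmeasurable) auto
  thus ?thesis using cell_measure[OF n] by (simp add: cell_mass_def)
qed

lemma cell_mass_cell_union:
  "n \<ge> 1 \<Longrightarrow> cell_mass n (cell_union n K) i = (if i \<in> K then 1 / real n else 0)"
  by (simp add: cell_mass_def cell_union_inter_cell cell_measure)

lemma GammaW_discretisation:
  assumes n: "n \<ge> 1" and c: "0 < c"
    and w: "(\<lambda>(x,y). w x y) \<in> borel_measurable (algN_measure n \<Otimes>\<^sub>M algN_measure n)"
    and wc: "\<forall>x\<in>{0..1}. \<forall>y\<in>{0..1}. \<bar>w x y\<bar> \<le> c" and B: "B \<in> measSets"
  shows "\<bar>GammaW w B - gamma_form (cell_sum n (zext w) (cell_mass n B))\<bar> \<le> 8 * c / real n"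
proof -
  have "B \<in> sets lebesgue" using B by (simp add: measSets_def)
  moreover have "\<bar>zext w a b\<bar> \<le> c" for a b using wc c by (intro zext_bound) auto
  ultimately show ?thesis unfolding GammaW_eq_gamma_form[OF B]
    by (intro gamma_form_discretisation[OF n zext_borel[OF w]] zext_cell_centre[OF w n])
qed

lemma discretised_vertex:
  assumes W: "(\<lambda>p. W (fst p) (snd p)) \<in> borel_measurable borel" and Wc: "\<And>a b. \<bar>W a b\<bar> \<le> c"
    and n: "n \<ge> 1" and A: "A \<in> sets lebesgue"
  shows "\<exists>K\<subseteq>{..<n}. gamma_form (cell_sum n W (cell_mass n A))
                        \<le> gamma_form (cell_sum n W (cell_mass n (cell_union n K)))"
proof -
  define \<Phi> where "\<Phi> \<alpha> = gamma_form (cell_sum n W \<alpha>)" for \<alpha>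
  have "\<exists>K\<subseteq>{..<n}. \<Phi> (cell_mass n A) \<le> \<Phi> (\<lambda>i. if i \<in> K then 1 / real n else 0)"
  proof (rule convex_box_vertex)
    show "\<Phi> (\<lambda>i. (1 - s) * \<beta>0 i + s * \<beta>1 i) \<le> (1 - s) * \<Phi> \<beta>0 + s * \<Phi> \<beta>1"
      if "0 \<le> s" "s \<le> 1" for \<beta>0 \<beta>1 s
      unfolding \<Phi>_def by (rule discretised_convex[OF W Wc that])
    show "\<Phi> \<alpha> = \<Phi> \<beta>" if "\<And>i. i < n \<Longrightarrow> \<alpha> i = \<beta> i" for \<alpha> \<beta>
      unfolding \<Phi>_def using cell_sum_local[OF that] by simp
    show "0 < 1 / real n" using n by simp
    show "0 \<le> cell_mass n A i \<and> cell_mass n A i \<le> 1 / real n" for i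
      by (rule cell_mass_box[OF n A])
  qed
  moreover have "cell_mass n (cell_union n K) = (\<lambda>i. if i \<in> K then 1 / real n else 0)" for K
    by (simp add: fun_eq_iff cell_mass_cell_union[OF n])
  ultimately show ?thesis unfolding \<Phi>_def by simp
qed

text \<open>Main estimate: every admissible set is beaten, up to 16c/n, by a set of A_n^*:
  discretise (error 8c/n), move to a vertex, and undo the discretisation (error 8c/n).\<close>
lemma gamma_le_gamma_algN:
  assumes n: "n \<ge> 1" and c: "0 < c"
    and w: "(\<lambda>(x,y). w x y) \<in> borel_measurable (algN_measure n \<Otimes>\<^sub>M algN_measure n)"
    and wc: "\<forall>x\<in>{0..1}. \<forall>y\<in>{0..1}. \<bar>w x y\<bar> \<le> c" and A: "A \<in> measSets"
  shows "\<exists>B\<in>algN n. GammaW w A \<le> GammaW w B + 16 * c / real n"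
proof -
  let ?\<Phi> = "\<lambda>B. gamma_form (cell_sum n (zext w) (cell_mass n B))"
  have "\<bar>zext w a b\<bar> \<le> c" for a b using wc c by (intro zext_bound) auto
  moreover have "A \<in> sets lebesgue" using A by (simp add: measSets_def)
  ultimately obtain K where K: "K \<subseteq> {..<n}" "?\<Phi> A \<le> ?\<Phi> (cell_union n K)"
    using discretised_vertex[OF zext_borel[OF w] _ n] by blast
  have B: "cell_union n K \<in> algN n" by (rule cell_union_in_algN[OF K(1)])
  hence "cell_union n K \<in> measSets" using algN_subset_measSets by blast
  hence "?\<Phi> (cell_union n K) \<le> GammaW w (cell_union n K) + 8 * c / real n"
    using GammaW_discretisation[OF n c w wc, of "cell_union n K"] by (simp add: abs_le_iff)
  moreover have "GammaW w A \<le> ?\<Phi> A + 8 * c / real n"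
    using GammaW_discretisation[OF n c w wc A] by (simp add: abs_le_iff)
  ultimately have "GammaW w A \<le> GammaW w (cell_union n K) + 16 * c / real n" using K(2) by simp
  thus ?thesis using B by blast
qed

theorem mainTheorem6:
  shows "\<exists>C::real. \<forall>(n::nat) (c::real) (w::real \<Rightarrow> real \<Rightarrow> real).
      n \<ge> 1 \<longrightarrow> c > 0 \<longrightarrow> w \<in> graphonW
      \<longrightarrow> (\<forall>x\<in>{0..1}. \<forall>y\<in>{0..1}. \<bar>w x y\<bar> \<le> c)
      \<longrightarrow> (\<lambda>(x,y). w x y) \<in> borel_measurable (algN_measure n \<Otimes>\<^sub>M algN_measure n)
      \<longrightarrow> \<bar>GammaSup w - Max (GammaW w ` algN n)\<bar> \<le> C * c / real n"
proof (intro exI[of _ 16] allI impI)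
  fix n :: nat and c :: real and w :: "real \<Rightarrow> real \<Rightarrow> real"
  assume n: "n \<ge> 1" and c: "c > 0" and "w \<in> graphonW"
    and wc: "\<forall>x\<in>{0..1}. \<forall>y\<in>{0..1}. \<bar>w x y\<bar> \<le> c"
    and w: "(\<lambda>(x,y). w x y) \<in> borel_measurable (algN_measure n \<Otimes>\<^sub>M algN_measure n)"
  define M where "M = Max (GammaW w ` algN n)"
  have fin: "finite (GammaW w ` algN n)" using finite_algN by simp
  have "{} \<in> algN n" unfolding algN_def by (rule sigma_sets.Empty)
  then obtain A0 where A0: "A0 \<in> algN n" "M = GammaW w A0"
    using Max_in[OF fin] by (fastforce simp: M_def)
  have upper: "GammaW w A \<le> M + 16 * c / real n" if A: "A \<in> measSets" for A
  proof -
    obtain B where "B \<in> algN n" "GammaW w A \<le> GammaW w B + 16 * c / real n"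
      using gamma_le_gamma_algN[OF n c w wc A] by blast
    moreover have "GammaW w B \<le> M" unfolding M_def using fin \<open>B \<in> algN n\<close> by simp
    ultimately show ?thesis by linarith
  qed
  have sets: "A0 \<in> measSets" "measSets \<noteq> {}" using A0(1) algN_subset_measSets by auto
  have "GammaSup w \<le> M + 16 * c / real n"
    unfolding GammaSup_def using sets(2) upper by (rule cSUP_least)
  moreover have "M \<le> GammaSup w"
    unfolding GammaSup_def A0(2) using sets(1) upper by (intro cSUP_upper bdd_aboveI2) auto
  ultimately show "\<bar>GammaSup w - Max (GammaW w ` algN n)\<bar> \<le> 16 * c / real n"
    unfolding M_def[symmetric] by (simp add: abs_le_iff)
qed

end
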